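(* Assume the setting of the integrated dissipation equalities: $L>0$, $g>0$, $b\in\mathbb{R}$, $v,\theta\in C^2([0,L])$ with $v>0$, $p,q$ continuous on $[0,L]$ satisfying $$p+b\left(2vv'\theta'+v^2\theta''\right)+g\left(vv''-v^2(\theta')^2\right)=0,\qquad q+b\left(vv''-v^2(\theta')^2\right)-g\left(2vv'\theta'+v^2\theta''\right)=0,$$ and $\theta(0)=0$, $v(0)=1$, $\theta'(L)=0$, $v'(L)=0$. Suppose moreover $b\ge 0$ and $p(x)\le 0$, $q(x)\le 0$ for all $x\in[0,L]$. Then $v'(0)\le 0$ (voltage drop). Furthermore, $$\theta'(0)\le 0\iff \frac{b}{g}\int_0^Lp(x)\,dx\le\int_0^Lq(x)\,dx\ (\le 0).$$
   Context: Primes denote $d/dx$. $v$ is voltage amplitude, $\theta$ voltage phase, $p,q$ active/reactive power injections at position $x$ (nonpositive values mean consumption by loads), $g$ conductance and $b$ susceptance per unit length of a straight feeder with transformer at $x=0$. *)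

theory Defs
  imports "HOL-Analysis.Analysis"
begin

end

theory Submission
  imports Defs "HOL-Analysis.Analysis"
begin

text \<open>Write \<open>A = (v\<^sup>2\<theta>')' = 2vv'\<theta>' + v\<^sup>2\<theta>''\<close> and \<open>B = vv'' - v\<^sup>2\<theta>'\<^sup>2\<close>. The two flow
  equations form, at every point, a linear system in \<open>A, B\<close> with matrix
  \<open>[[b, g], [-g, b]]\<close> of determinant \<open>b\<^sup>2 + g\<^sup>2 > 0\<close>. Solving it, nonpositive
  injections and \<open>b \<ge> 0\<close> force \<open>B \<ge> 0\<close>, hence \<open>v'' \<ge> 0\<close>, so \<open>v'\<close> is nondecreasing and
  \<open>v'(0) \<le> v'(L) = 0\<close>. Integrating the solved equation for \<open>A\<close> over \<open>[0, L]\<close> and using the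
  boundary conditions gives \<open>-(b\<^sup>2 + g\<^sup>2) \<theta>'(0) = g \<integral>q - b \<integral>p\<close>, which is the stated
  equivalence.\<close>

lemma rotation_system_solve:
  fixes b g p q A B :: "'a::comm_ring_1"
  assumes "p + b * A + g * B = 0" and "q + b * B - g * A = 0"
  shows "(b\<^sup>2 + g\<^sup>2) * A = g * q - b * p"
    and "(b\<^sup>2 + g\<^sup>2) * B = - (g * p + b * q)"
proof -
  have "(b\<^sup>2 + g\<^sup>2) * A - (g * q - b * p) = b * (p + b * A + g * B) - g * (q + b * B - g * A)"
    and "(b\<^sup>2 + g\<^sup>2) * B + (g * p + b * q) = g * (p + b * A + g * B) + b * (q + b * B - g * A)"
    by (simp_all add: algebra_simps power2_eq_square)
  with assms show "(b\<^sup>2 + g\<^sup>2) * A = g * q - b * p" and "(b\<^sup>2 + g\<^sup>2) * B = - (g * p + b * q)"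
    unfolding eq_neg_iff_add_eq_0 by simp_all
qed

lemma rotation_system_solution_nonneg:
  fixes b g p q A B :: real
  assumes "p + b * A + g * B = 0" and "q + b * B - g * A = 0"
    and "g > 0" and "b \<ge> 0" and "p \<le> 0" and "q \<le> 0"
  shows "B \<ge> 0"
proof -
  have "g * p + b * q \<le> 0"
    using assms(3-6) by (simp add: add_nonpos_nonpos mult_nonneg_nonpos)
  then have "(b\<^sup>2 + g\<^sup>2) * B \<ge> 0"
    using rotation_system_solve(2)[OF assms(1,2)] by simp
  moreover have "b\<^sup>2 + g\<^sup>2 > 0"
    using \<open>g > 0\<close> by (simp add: add_nonneg_pos)
  ultimately show ?thesis by (simp add: zero_le_mult_iff)
qed

lemma has_real_derivative_nonneg_imp_le:
  fixes f f' :: "real \<Rightarrow> real"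
  assumes "a \<le> b"
    and "\<And>x. x \<in> {a..b} \<Longrightarrow> (f has_real_derivative f' x) (at x within {a..b})"
    and "\<And>x. x \<in> {a..b} \<Longrightarrow> f' x \<ge> 0"
  shows "f a \<le> f b"
proof -
  obtain x where x: "x \<in> {a..b}" and "f b - f a = f' x * (b - a)"
    using mvt_very_simple[of a b f "\<lambda>x h. f' x * h"] assms(1,2)
    by (auto simp: has_field_derivative_def)
  then show ?thesis
    using assms(1) assms(3)[OF x] by (smt (verit) mult_nonneg_nonneg)
qed

lemma has_integral_sq_mult_derivative:
  fixes v v' \<theta>' \<theta>'' :: "real \<Rightarrow> real"
  assumes "a \<le> b"
    and "\<And>x. x \<in> {a..b} \<Longrightarrow> (v has_real_derivative v' x) (at x within {a..b})"
    and "\<And>x. x \<in> {a..b} \<Longrightarrow> (\<theta>' has_real_derivative \<theta>'' x) (at x within {a..b})"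
  shows "((\<lambda>x. 2 * v x * v' x * \<theta>' x + (v x)\<^sup>2 * \<theta>'' x)
           has_integral (v b)\<^sup>2 * \<theta>' b - (v a)\<^sup>2 * \<theta>' a) {a..b}"
proof (rule fundamental_theorem_of_calculus[OF assms(1)])
  fix x assume x: "x \<in> {a..b}"
  have "((\<lambda>x. (v x)\<^sup>2 * \<theta>' x) has_real_derivative
      2 * v x * v' x * \<theta>' x + (v x)\<^sup>2 * \<theta>'' x) (at x within {a..b})"
    by (rule derivative_eq_intros assms(2)[OF x] assms(3)[OF x] refl | simp)+
  then show "((\<lambda>x. (v x)\<^sup>2 * \<theta>' x) has_vector_derivative
      2 * v x * v' x * \<theta>' x + (v x)\<^sup>2 * \<theta>'' x) (at x within {a..b})"
    by (simp add: has_real_derivative_iff_has_vector_derivative)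
qed

lemma nonpos_iff_of_scaled_balance:
  fixes D g b P Q t :: real
  assumes "D * - t = g * Q - b * P" and "D > 0" and "g > 0"
  shows "t \<le> 0 \<longleftrightarrow> b / g * P \<le> Q"
proof -
  have "t \<le> 0 \<longleftrightarrow> D * - t \<ge> 0"
    using \<open>D > 0\<close> by (simp add: mult_le_0_iff)
  also have "\<dots> \<longleftrightarrow> b / g * P \<le> Q"
    unfolding assms(1) using \<open>g > 0\<close> by (simp add: field_simps)
  finally show ?thesis .
qed

theorem mainTheorem5:
  fixes L g b :: real
    and v v' v'' \<theta> \<theta>' \<theta>'' p q :: "real \<Rightarrow> real"
  assumes L_pos: "L > 0" and g_pos: "g > 0"
    and dv: "\<And>x. x \<in> {0..L} \<Longrightarrow> (v has_real_derivative v' x) (at x within {0..L})"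
    and dv': "\<And>x. x \<in> {0..L} \<Longrightarrow> (v' has_real_derivative v'' x) (at x within {0..L})"
    and cv'': "continuous_on {0..L} v''"
    and dth: "\<And>x. x \<in> {0..L} \<Longrightarrow> (\<theta> has_real_derivative \<theta>' x) (at x within {0..L})"
    and dth': "\<And>x. x \<in> {0..L} \<Longrightarrow> (\<theta>' has_real_derivative \<theta>'' x) (at x within {0..L})"
    and cth'': "continuous_on {0..L} \<theta>''"
    and v_pos: "\<And>x. x \<in> {0..L} \<Longrightarrow> v x > 0"
    and cp: "continuous_on {0..L} p" and cq: "continuous_on {0..L} q"
    and eqP: "\<And>x. x \<in> {0..L} \<Longrightarrow>
      p x + b * (2 * v x * v' x * \<theta>' x + (v x)\<^sup>2 * \<theta>'' x)
          + g * (v x * v'' x - (v x)\<^sup>2 * (\<theta>' x)\<^sup>2) = 0"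
    and eqQ: "\<And>x. x \<in> {0..L} \<Longrightarrow>
      q x + b * (v x * v'' x - (v x)\<^sup>2 * (\<theta>' x)\<^sup>2)
          - g * (2 * v x * v' x * \<theta>' x + (v x)\<^sup>2 * \<theta>'' x) = 0"
    and bc: "\<theta> 0 = 0" "v 0 = 1" "\<theta>' L = 0" "v' L = 0"
    and b_nonneg: "b \<ge> 0"
    and p_nonpos: "\<And>x. x \<in> {0..L} \<Longrightarrow> p x \<le> 0"
    and q_nonpos: "\<And>x. x \<in> {0..L} \<Longrightarrow> q x \<le> 0"
  shows "v' 0 \<le> 0
    \<and> (\<theta>' 0 \<le> 0 \<longleftrightarrow> b / g * integral {0..L} p \<le> integral {0..L} q)
    \<and> integral {0..L} q \<le> 0"
proof -
  have "v'' x \<ge> 0" if x: "x \<in> {0..L}" for x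
  proof -
    have "v x * v'' x \<ge> (v x)\<^sup>2 * (\<theta>' x)\<^sup>2"
      using rotation_system_solution_nonneg[OF eqP[OF x] eqQ[OF x] g_pos b_nonneg
          p_nonpos[OF x] q_nonpos[OF x]] by simp
    then show ?thesis
      using v_pos[OF x] by (smt (verit) zero_le_mult_iff zero_le_power2 mult_nonneg_nonneg)
  qed
  then have voltage_drop: "v' 0 \<le> 0"
    using has_real_derivative_nonneg_imp_le[of 0 L v' v''] dv' L_pos bc(4) by simp
  have "((\<lambda>x. (b\<^sup>2 + g\<^sup>2) * (2 * v x * v' x * \<theta>' x + (v x)\<^sup>2 * \<theta>'' x))
           has_integral (b\<^sup>2 + g\<^sup>2) * - \<theta>' 0) {0..L}"
    using has_integral_mult_right[OF has_integral_sq_mult_derivative[OF _ dv dth']] L_pos bc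
    by simp
  then have "((\<lambda>x. g * q x - b * p x) has_integral (b\<^sup>2 + g\<^sup>2) * - \<theta>' 0) {0..L}"
    by (rule has_integral_eq[rotated]) (simp add: rotation_system_solve(1)[OF eqP eqQ])
  moreover have "((\<lambda>x. g * q x - b * p x) has_integral
      g * integral {0..L} q - b * integral {0..L} p) {0..L}"
    using cp cq by (intro has_integral_diff has_integral_mult_right integrable_integral
        integrable_continuous_interval)
  ultimately have "(b\<^sup>2 + g\<^sup>2) * - \<theta>' 0 = g * integral {0..L} q - b * integral {0..L} p"
    by (rule has_integral_unique)
  then have "\<theta>' 0 \<le> 0 \<longleftrightarrow> b / g * integral {0..L} p \<le> integral {0..L} q"
    by (rule nonpos_iff_of_scaled_balance) (use g_pos in \<open>simp_all add: add_nonneg_pos\<close>)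
  moreover have "integral {0..L} q \<le> 0"
    using integral_le[of q "{0..L}" "\<lambda>_. 0"] cq q_nonpos integrable_continuous_interval by auto
  ultimately show ?thesis
    using voltage_drop by blast
qed

end
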